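(* Let $\Sigma,T$ be finite. The guarded languages (over $(\Sigma,T)$) recognized by deterministic KAT automata over $(\Sigma,T)$ are precisely the deterministic regular guarded languages over $(\Sigma,T)$.
   Context: Atoms $\mathsf{At}_T=2^T$. Guarded strings over $(\Sigma,T)$ are words in $\mathsf{At}_T(\Sigma\mathsf{At}_T)^*$; a guarded language is a set of guarded strings; it is regular if it is a regular language over the finite alphabet $\mathsf{At}_T\cup\Sigma$. A guarded language $L$ is deterministic if for all distinct $w,w'\in L$: (i) $w$ is not a proper prefix of $w'$, (ii) the first position where $w,w'$ differ is an atom. A deterministic KAT automaton over $(\Sigma,T)$ is $A=(Q,\delta,\iota)$ with $Q$ finite, $\delta:Q\times\mathsf{At}_T\to\{\mathsf{accept},\mathsf{reject}\}+\Sigma\times Q$, $\iota:\mathsf{At}_T\to\{\mathsf{accept},\mathsf{reject}\}+\Sigma\times Q$. For $\gamma:\mathsf{At}_T\to\{\mathsf{accept},\mathsf{reject}\}+\Sigma\times Q$, $L_A(\gamma)$ is the smallest set such that $\gamma(\alpha)=\mathsf{accept}$ implies $\alpha\in L_A(\gamma)$, and $\gamma(\alpha)=(p,q)$ with $w\in L_A(\delta(q,-))$ implies $\alpha pw\in L_A(\gamma)$. The language recognized by $A$ is $L(A)=L_A(\iota)$. *)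

theory Defs
  imports Main "HOL-Library.Sublist"
begin

text \<open>Atoms At_T = 2^T are represented by the type 't set (T = UNIV :: 't set, finite).
 The alphabet At_T \<union> \<Sigma> is the disjoint sum 't set + 's: letters Inl \<alpha> are atoms,
 letters Inr p are actions.\<close>

type_synonym ('s, 't) letter = "'t set + 's"

fun guarded_string :: "('s, 't) letter list \<Rightarrow> bool" where
  "guarded_string [Inl \<alpha>] = True"
| "guarded_string (Inl \<alpha> # Inr p # w) = guarded_string w"
| "guarded_string _ = False"

definition guarded_lang :: "('s, 't) letter list set \<Rightarrow> bool" where
  "guarded_lang L \<longleftrightarrow> (\<forall>w\<in>L. guarded_string w)"

definition regular_lang :: "'a list set \<Rightarrow> bool" where
  "regular_lang L \<longleftrightarrow> (\<exists>(Q :: nat set) q0 (d :: nat \<Rightarrow> 'a \<Rightarrow> nat) F.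
      finite Q \<and> q0 \<in> Q \<and> (\<forall>q\<in>Q. \<forall>a. d q a \<in> Q) \<and> F \<subseteq> Q \<and>
      L = {w. foldl d q0 w \<in> F})"

definition deterministic_lang :: "('s, 't) letter list set \<Rightarrow> bool" where
  "deterministic_lang L \<longleftrightarrow> (\<forall>w\<in>L. \<forall>w'\<in>L. w \<noteq> w' \<longrightarrow>
      \<not> strict_prefix w w' \<and>
      (\<forall>i. i < length w \<and> i < length w' \<and> w ! i \<noteq> w' ! i \<and> (\<forall>j<i. w ! j = w' ! j)
           \<longrightarrow> isl (w ! i) \<and> isl (w' ! i)))"

datatype ('s, 'q) kat_res = Accept | Reject | Go 's 'q

inductive kat_acc :: "('q \<Rightarrow> 't set \<Rightarrow> ('s, 'q) kat_res) \<Rightarrow> ('t set \<Rightarrow> ('s, 'q) kat_res)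
                      \<Rightarrow> ('s, 't) letter list \<Rightarrow> bool" for \<delta> where
  acc_accept: "\<gamma> \<alpha> = Accept \<Longrightarrow> kat_acc \<delta> \<gamma> [Inl \<alpha>]"
| acc_step: "\<gamma> \<alpha> = Go p q \<Longrightarrow> kat_acc \<delta> (\<delta> q) w \<Longrightarrow> kat_acc \<delta> \<gamma> (Inl \<alpha> # Inr p # w)"

definition kat_lang :: "('q \<Rightarrow> 't set \<Rightarrow> ('s, 'q) kat_res) \<Rightarrow> ('t set \<Rightarrow> ('s, 'q) kat_res)
                       \<Rightarrow> ('s, 't) letter list set" where
  "kat_lang \<delta> \<iota> = {w. kat_acc \<delta> \<iota> w}"

definition kat_automaton :: "nat set \<Rightarrow> (nat \<Rightarrow> 't set \<Rightarrow> ('s, nat) kat_res)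
                              \<Rightarrow> ('t set \<Rightarrow> ('s, nat) kat_res) \<Rightarrow> bool" where
  "kat_automaton Q \<delta> \<iota> \<longleftrightarrow> finite Q \<and>
     (\<forall>\<alpha> p q. \<iota> \<alpha> = Go p q \<longrightarrow> q \<in> Q) \<and>
     (\<forall>q'\<in>Q. \<forall>\<alpha> p q. \<delta> q' \<alpha> = Go p q \<longrightarrow> q \<in> Q)"

end

theory Submission
  imports Defs
begin

text \<open>
  A deterministic language is prefix-free and, wherever two of its words branch, both branch on
  an atom. A KAT automaton has this property because each state, on an atom, either stops or
  commits to a single action; and it is simulated by a finite automaton reading atoms and actions
  alternately, so its language is regular. Conversely, from a finite automaton for a deterministic
  guarded language one reads off a KAT automaton on the same states: after an atom, accept if the
  automaton accepts, otherwise take the action from which an accepting state is still reachable,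
  which is unique by determinism.
\<close>

lemma deterministic_lang_iff:
  "deterministic_lang L \<longleftrightarrow>
     (\<forall>w v. w \<in> L \<longrightarrow> w @ v \<in> L \<longrightarrow> v = []) \<and>
     (\<forall>x a y b z. x @ a # y \<in> L \<longrightarrow> x @ b # z \<in> L \<longrightarrow> a \<noteq> b \<longrightarrow> isl a \<and> isl b)"
  (is "_ \<longleftrightarrow> ?prefix_free \<and> ?branch")
proof
  assume det: "deterministic_lang L"
  show "?prefix_free \<and> ?branch"
  proof (rule conjI; intro allI impI)
    fix w v assume "w \<in> L" "w @ v \<in> L"
    show "v = []"
    proof (rule ccontr)
      assume "v \<noteq> []"
      then have "strict_prefix w (w @ v)" and "w \<noteq> w @ v"
        by (auto simp: strict_prefix_def)
      with det \<open>w \<in> L\<close> \<open>w @ v \<in> L\<close> show False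
        unfolding deterministic_lang_def by blast
    qed
  next
    fix x a y b z assume "x @ a # y \<in> L" "x @ b # z \<in> L" "a \<noteq> b"
    with det have "\<forall>i. i < length (x @ a # y) \<and> i < length (x @ b # z) \<and>
        (x @ a # y) ! i \<noteq> (x @ b # z) ! i \<and> (\<forall>j<i. (x @ a # y) ! j = (x @ b # z) ! j)
        \<longrightarrow> isl ((x @ a # y) ! i) \<and> isl ((x @ b # z) ! i)"
      unfolding deterministic_lang_def by auto
    from this[rule_format, of "length x"] \<open>a \<noteq> b\<close> show "isl a \<and> isl b"
      by (simp add: nth_append)
  qed
next
  assume "?prefix_free \<and> ?branch"
  then have prefix_free: ?prefix_free and branch: ?branch by blast+
  show "deterministic_lang L"
    unfolding deterministic_lang_def
  proof (intro ballI impI conjI)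
    fix w w' assume "w \<in> L" "w' \<in> L" "w \<noteq> w'"
    then show "\<not> strict_prefix w w'"
      using prefix_free by (auto simp: strict_prefix_def prefix_def)
    show "\<forall>i. i < length w \<and> i < length w' \<and> w ! i \<noteq> w' ! i \<and> (\<forall>j<i. w ! j = w' ! j)
           \<longrightarrow> isl (w ! i) \<and> isl (w' ! i)"
    proof (intro allI impI)
      fix i assume i: "i < length w \<and> i < length w' \<and> w ! i \<noteq> w' ! i \<and> (\<forall>j<i. w ! j = w' ! j)"
      then have "take i w = take i w'"
        by (intro nth_equalityI) auto
      then have "take i w @ w ! i # drop (Suc i) w \<in> L" "take i w @ w' ! i # drop (Suc i) w' \<in> L"
        using \<open>w \<in> L\<close> \<open>w' \<in> L\<close> i by (metis id_take_nth_drop)+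
      then show "isl (w ! i) \<and> isl (w' ! i)"
        using branch i by blast
    qed
  qed
qed

lemma deterministic_lang_residual:
  assumes "deterministic_lang L"
  shows "deterministic_lang {v. u @ v \<in> L}"
  using assms unfolding deterministic_lang_iff by (metis append.assoc mem_Collect_eq)

lemma guarded_lang_residual:
  assumes "guarded_lang L"
  shows "guarded_lang {v. [Inl \<alpha>, Inr p] @ v \<in> L}"
  using assms unfolding guarded_lang_def
  by (metis guarded_string.simps(2) append_Cons append_Nil mem_Collect_eq)

lemma guarded_string_induct [consumes 1, case_names atom step]:
  assumes "guarded_string w"
    and "\<And>\<alpha>. P [Inl \<alpha>]"
    and "\<And>\<alpha> p w. guarded_string w \<Longrightarrow> P w \<Longrightarrow> P (Inl \<alpha> # Inr p # w)"
  shows "P w"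
  using assms by (induction w rule: guarded_string.induct) auto

lemma kat_acc_Nil [simp]: "\<not> kat_acc \<delta> \<gamma> []"
  by (auto elim: kat_acc.cases)

lemma kat_acc_Cons:
  "kat_acc \<delta> \<gamma> (a # w) \<longleftrightarrow> (\<exists>\<alpha>. a = Inl \<alpha> \<and>
     (\<gamma> \<alpha> = Accept \<and> w = [] \<or> (\<exists>p q w'. \<gamma> \<alpha> = Go p q \<and> w = Inr p # w' \<and> kat_acc \<delta> (\<delta> q) w')))"
  by (subst kat_acc.simps) auto

lemma kat_acc_guarded_string: "kat_acc \<delta> \<gamma> w \<Longrightarrow> guarded_string w"
  by (induction rule: kat_acc.induct) auto

lemma kat_acc_prefix_free: "kat_acc \<delta> \<gamma> w \<Longrightarrow> kat_acc \<delta> \<gamma> (w @ v) \<Longrightarrow> v = []"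
  by (induction arbitrary: v rule: kat_acc.induct) (auto simp: kat_acc_Cons)

lemma kat_acc_branch_isl:
  "kat_acc \<delta> \<gamma> (x @ a # y) \<Longrightarrow> kat_acc \<delta> \<gamma> (x @ b # z) \<Longrightarrow> a \<noteq> b \<Longrightarrow> isl a \<and> isl b"
  by (induction "x @ a # y" arbitrary: x rule: kat_acc.induct)
    (auto simp: Cons_eq_append_conv kat_acc_Cons)

lemma kat_lang_deterministic: "deterministic_lang (kat_lang \<delta> \<gamma>)"
  unfolding deterministic_lang_iff kat_lang_def
  using kat_acc_prefix_free kat_acc_branch_isl by blast

lemma kat_lang_guarded: "guarded_lang (kat_lang \<delta> \<gamma>)"
  unfolding guarded_lang_def kat_lang_def using kat_acc_guarded_string by blast

lemma regular_langI:
  fixes Q :: "'q set" and d :: "'q \<Rightarrow> 'a \<Rightarrow> 'q"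
  assumes "finite Q" and "q0 \<in> Q" and closed: "\<forall>q\<in>Q. \<forall>a. d q a \<in> Q" and "F \<subseteq> Q"
  shows "regular_lang {w. foldl d q0 w \<in> F}"
proof -
  obtain f :: "'q \<Rightarrow> nat" where f: "inj_on f Q"
    using finite_imp_inj_to_nat_seg[OF \<open>finite Q\<close>] by blast
  define d' where "d' m a = f (d (inv_into Q f m) a)" for m a
  have foldl_in: "foldl d q w \<in> Q" if "q \<in> Q" for q w
    using that closed by (induction w arbitrary: q) auto
  have foldl_d': "foldl d' (f q) w = f (foldl d q w)" if "q \<in> Q" for q w
    using that closed by (induction w arbitrary: q) (simp_all add: d'_def f)
  show ?thesis
    unfolding regular_lang_def
  proof (intro exI conjI)
    show "finite (f ` Q)" "f q0 \<in> f ` Q" "f ` F \<subseteq> f ` Q"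
      using assms by auto
    show "\<forall>m\<in>f ` Q. \<forall>a. d' m a \<in> f ` Q"
      using closed by (auto simp: d'_def f)
    show "{w. foldl d q0 w \<in> F} = {w. foldl d' (f q0) w \<in> f ` F}"
      using foldl_d' foldl_in inj_on_image_mem_iff[OF f _ \<open>F \<subseteq> Q\<close>] \<open>q0 \<in> Q\<close> by auto
  qed
qed

lemma foldl_mem_iff_residual:
  assumes "\<And>s. [] \<in> R s \<longleftrightarrow> s \<in> F" and "\<And>s a w. a # w \<in> R s \<longleftrightarrow> w \<in> R (d s a)"
  shows "foldl d s w \<in> F \<longleftrightarrow> w \<in> R s"
  using assms by (induction w arbitrary: s) simp_all

datatype ('g, 's, 'q) kat_dfa_state = Atom_Pending 'g | Action_Pending 's 'q | Accepted | Dead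

fun kat_dfa_step ::
  "('q \<Rightarrow> 't set \<Rightarrow> ('s, 'q) kat_res) \<Rightarrow> ('t set \<Rightarrow> ('s, 'q) kat_res, 's, 'q) kat_dfa_state
    \<Rightarrow> ('s, 't) letter \<Rightarrow> ('t set \<Rightarrow> ('s, 'q) kat_res, 's, 'q) kat_dfa_state"
  where
  "kat_dfa_step \<delta> (Atom_Pending \<gamma>) (Inl \<alpha>) =
     (case \<gamma> \<alpha> of Accept \<Rightarrow> Accepted | Reject \<Rightarrow> Dead | Go p q \<Rightarrow> Action_Pending p q)"
| "kat_dfa_step \<delta> (Action_Pending p q) (Inr p') = (if p' = p then Atom_Pending (\<delta> q) else Dead)"
| "kat_dfa_step \<delta> _ _ = Dead"

fun kat_dfa_residual ::
  "('q \<Rightarrow> 't set \<Rightarrow> ('s, 'q) kat_res) \<Rightarrow> ('t set \<Rightarrow> ('s, 'q) kat_res, 's, 'q) kat_dfa_state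
    \<Rightarrow> ('s, 't) letter list set"
  where
  "kat_dfa_residual \<delta> (Atom_Pending \<gamma>) = kat_lang \<delta> \<gamma>"
| "kat_dfa_residual \<delta> (Action_Pending p q) = (#) (Inr p) ` kat_lang \<delta> (\<delta> q)"
| "kat_dfa_residual \<delta> Accepted = {[]}"
| "kat_dfa_residual \<delta> Dead = {}"

lemma Cons_mem_kat_dfa_residual:
  "a # w \<in> kat_dfa_residual \<delta> s \<longleftrightarrow> w \<in> kat_dfa_residual \<delta> (kat_dfa_step \<delta> s a)"
  by (cases s; cases a) (auto simp: kat_lang_def kat_acc_Cons split: kat_res.split)

lemma kat_lang_eq_dfa_lang:
  "kat_lang \<delta> \<gamma> = {w. foldl (kat_dfa_step \<delta>) (Atom_Pending \<gamma>) w \<in> {Accepted}}"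
proof -
  have "[] \<in> kat_dfa_residual \<delta> s \<longleftrightarrow> s \<in> {Accepted}" for s
    by (cases s) (auto simp: kat_lang_def)
  from foldl_mem_iff_residual[OF this Cons_mem_kat_dfa_residual] show ?thesis
    by (intro set_eqI) (simp only: mem_Collect_eq kat_dfa_residual.simps)
qed

lemma kat_lang_regular:
  fixes \<delta> :: "nat \<Rightarrow> 't set \<Rightarrow> ('s::finite, nat) kat_res"
  assumes "kat_automaton Q \<delta> \<iota>"
  shows "regular_lang (kat_lang \<delta> \<iota>)"
  unfolding kat_lang_eq_dfa_lang
proof (rule regular_langI)
  have \<iota>_closed: "q \<in> Q" if "\<iota> \<alpha> = Go p q" for \<alpha> p q
    using assms that unfolding kat_automaton_def by blast
  have \<delta>_closed: "q \<in> Q" if "q' \<in> Q" "\<delta> q' \<alpha> = Go p q" for q' \<alpha> p q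
    using assms that unfolding kat_automaton_def by blast
  let ?S = "insert (Atom_Pending \<iota>) (Atom_Pending ` \<delta> ` Q
              \<union> case_prod Action_Pending ` ((UNIV :: 's set) \<times> Q) \<union> {Accepted, Dead})"
  show "finite ?S"
    using assms by (auto simp: kat_automaton_def intro!: finite_imageI finite_cartesian_product)
  show "\<forall>s\<in>?S. \<forall>a. kat_dfa_step \<delta> s a \<in> ?S"
  proof (intro ballI allI)
    fix s a assume "s \<in> ?S"
    then consider "s = Atom_Pending \<iota>" | q where "q \<in> Q" "s = Atom_Pending (\<delta> q)"
      | p q where "q \<in> Q" "s = Action_Pending p q" | "s = Accepted" | "s = Dead"
      by auto
    then show "kat_dfa_step \<delta> s a \<in> ?S"
      by cases (cases a; auto simp: image_iff intro: \<iota>_closed \<delta>_closed split: kat_res.split)+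
  qed
qed simp_all

definition kat_of_dfa :: "('q \<Rightarrow> ('s, 't) letter \<Rightarrow> 'q) \<Rightarrow> 'q set \<Rightarrow> 'q \<Rightarrow> 't set \<Rightarrow> ('s, 'q) kat_res"
  where
  "kat_of_dfa d F q \<alpha> =
     (let q' = d q (Inl \<alpha>); live = (\<lambda>p. \<exists>v. foldl d (d q' (Inr p)) v \<in> F) in
      if q' \<in> F then Accept
      else if \<exists>p. live p then Go (SOME p. live p) (d q' (Inr (SOME p. live p)))
      else Reject)"

lemma kat_automaton_of_dfa:
  assumes "finite Q" and "q0 \<in> Q" and "\<forall>q\<in>Q. \<forall>a. d q a \<in> Q"
  shows "kat_automaton Q (kat_of_dfa d F) (kat_of_dfa d F q0)"
  using assms unfolding kat_automaton_def kat_of_dfa_def Let_def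
  by (auto split: if_splits)

lemma kat_acc_of_dfa_sound:
  "kat_acc (kat_of_dfa d F) \<gamma> w \<Longrightarrow> \<gamma> = kat_of_dfa d F q \<Longrightarrow> foldl d q w \<in> F"
proof (induction arbitrary: q rule: kat_acc.induct)
  case (acc_accept \<gamma> \<alpha>)
  then show ?case by (auto simp: kat_of_dfa_def Let_def split: if_splits)
next
  case (acc_step \<gamma> \<alpha> p q' w)
  then have "q' = d (d q (Inl \<alpha>)) (Inr p)"
    by (auto simp: kat_of_dfa_def Let_def split: if_splits)
  with acc_step.IH show ?case by simp
qed

lemma kat_of_dfa_eq_Go:
  assumes det: "deterministic_lang {w. foldl d q w \<in> F}"
    and accepted: "foldl d q (Inl \<alpha> # Inr p # w) \<in> F"
  shows "kat_of_dfa d F q \<alpha> = Go p (d (d q (Inl \<alpha>)) (Inr p))"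
proof -
  define q' where "q' = d q (Inl \<alpha>)"
  define live where "live p \<longleftrightarrow> (\<exists>v. foldl d (d q' (Inr p)) v \<in> F)" for p
  from det have prefix_free: "foldl d q u \<in> F \<Longrightarrow> foldl d q (u @ v) \<in> F \<Longrightarrow> v = []"
    and branch: "foldl d q (x @ a # y) \<in> F \<Longrightarrow> foldl d q (x @ b # z) \<in> F \<Longrightarrow> a \<noteq> b
                   \<Longrightarrow> isl a \<and> isl b" for u v x a y b z
    unfolding deterministic_lang_iff by blast+
  have "q' \<notin> F"
    using prefix_free[of "[Inl \<alpha>]" "Inr p # w"] accepted by (auto simp: q'_def)
  have "live p"
    using accepted by (auto simp: live_def q'_def)
  have "(SOME p. live p) = p"
  proof (rule ccontr)
    assume "(SOME p. live p) \<noteq> p"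
    moreover obtain v where "foldl d (d q' (Inr (SOME p. live p))) v \<in> F"
      using someI[of live, OF \<open>live p\<close>] live_def by blast
    ultimately show False
      using branch[of "[Inl \<alpha>]" "Inr (SOME p. live p)" _ "Inr p" w] accepted
      by (simp add: q'_def)
  qed
  with \<open>live p\<close> \<open>q' \<notin> F\<close> show ?thesis
    by (auto simp: kat_of_dfa_def Let_def q'_def live_def)
qed

lemma kat_acc_of_dfa_complete:
  assumes "guarded_lang {w. foldl d q w \<in> F}" and "deterministic_lang {w. foldl d q w \<in> F}"
    and "foldl d q w \<in> F"
  shows "kat_acc (kat_of_dfa d F) (kat_of_dfa d F q) w"
proof -
  have "guarded_string w"
    using assms(1,3) by (simp add: guarded_lang_def)
  then show ?thesis
    using assms
  proof (induction w arbitrary: q rule: guarded_string_induct)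
    case (atom \<alpha>)
    then show ?case
      by (simp add: kat_of_dfa_def acc_accept)
  next
    case (step \<alpha> p w)
    let ?q' = "d (d q (Inl \<alpha>)) (Inr p)"
    have "kat_of_dfa d F q \<alpha> = Go p ?q'"
      using kat_of_dfa_eq_Go step.prems(2,3) .
    moreover have "kat_acc (kat_of_dfa d F) (kat_of_dfa d F ?q') w"
    proof (rule step.IH)
      show "guarded_lang {w. foldl d ?q' w \<in> F}"
        using guarded_lang_residual[OF step.prems(1), of \<alpha> p] by simp
      show "deterministic_lang {w. foldl d ?q' w \<in> F}"
        using deterministic_lang_residual[OF step.prems(2), of "[Inl \<alpha>, Inr p]"] by simp
      show "foldl d ?q' w \<in> F"
        using step.prems(3) by simp
    qed
    ultimately show ?case
      by (rule acc_step)
  qed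
qed

lemma kat_lang_of_dfa:
  assumes "guarded_lang {w. foldl d q w \<in> F}" and "deterministic_lang {w. foldl d q w \<in> F}"
  shows "kat_lang (kat_of_dfa d F) (kat_of_dfa d F q) = {w. foldl d q w \<in> F}"
  using kat_acc_of_dfa_sound[OF _ refl] kat_acc_of_dfa_complete[OF assms]
  unfolding kat_lang_def by auto

theorem proposition4p12:
  fixes dummy :: "'s::finite \<times> 't::finite"
  shows "{kat_lang \<delta> \<iota> | (Q :: nat set) (\<delta> :: nat \<Rightarrow> 't set \<Rightarrow> ('s, nat) kat_res) \<iota>.
            kat_automaton Q \<delta> \<iota>}
       = {L :: ('s, 't) letter list set. guarded_lang L \<and> deterministic_lang L \<and> regular_lang L}"
proof (intro equalityI subsetI)
  fix L :: "('s, 't) letter list set"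
  assume "L \<in> {kat_lang \<delta> \<iota> | (Q :: nat set) (\<delta> :: nat \<Rightarrow> 't set \<Rightarrow> ('s, nat) kat_res) \<iota>.
            kat_automaton Q \<delta> \<iota>}"
  then obtain Q and \<delta> :: "nat \<Rightarrow> 't set \<Rightarrow> ('s, nat) kat_res" and \<iota>
    where "kat_automaton Q \<delta> \<iota>" and "L = kat_lang \<delta> \<iota>"
    by blast
  then show "L \<in> {L. guarded_lang L \<and> deterministic_lang L \<and> regular_lang L}"
    by (simp add: kat_lang_guarded kat_lang_deterministic kat_lang_regular)
next
  fix L :: "('s, 't) letter list set"
  assume "L \<in> {L. guarded_lang L \<and> deterministic_lang L \<and> regular_lang L}"
  then have "guarded_lang L" "deterministic_lang L" and "regular_lang L"
    by simp_all
  from \<open>regular_lang L\<close> obtain Q :: "nat set" and q0 d F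
    where Q: "finite Q" "q0 \<in> Q" "\<forall>q\<in>Q. \<forall>a. d q a \<in> Q" and L: "L = {w. foldl d q0 w \<in> F}"
    unfolding regular_lang_def by blast
  have "kat_automaton Q (kat_of_dfa d F) (kat_of_dfa d F q0)"
    using kat_automaton_of_dfa[OF Q] .
  moreover have "L = kat_lang (kat_of_dfa d F) (kat_of_dfa d F q0)"
    using \<open>guarded_lang L\<close> \<open>deterministic_lang L\<close> unfolding L by (simp only: kat_lang_of_dfa)
  ultimately show "L \<in> {kat_lang \<delta> \<iota> | (Q :: nat set) (\<delta> :: nat \<Rightarrow> 't set \<Rightarrow> ('s, nat) kat_res) \<iota>.
            kat_automaton Q \<delta> \<iota>}"
    by blast
qed

end
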